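(* Let $P$ be a finite near-simplicial poset of rank $d$ with $f$-vector $(f_{-1},f_0,\dots,f_d)$. Then $$\mathcal{M}_P(z)=g^P_d(z)+\sum_{r=-1}^{d-1}(1-z)^{r+1}f_r.$$
   Context: A ranked poset is a poset with a rank function $|\cdot|$ such that covering relations increase rank by one and minimal elements have rank $-1$; $f_r$ is the number of elements of rank $r$; $P_{\le i}=\{p:|p|\le i\}$. A simplicial poset is a ranked poset in which every closed interval $[p,q]$ ($p\le q$) is isomorphic to a Boolean lattice (the subsets of $\{1,\dots,n\}$ under inclusion) for some $n$. A near-simplicial poset of rank $d$ is a ranked poset $P$ such that $P_{\le d-1}$ is a disjoint union (elements of different components incomparable) of simplicial posets each having a unique minimum element. The Möbius function $\mu$ is $\mu[p,p]=1$, $\mu[p,q]=-\sum_{p\le s<q}\mu[p,s]$ for $p<q$, $0$ if $p\not\le q$; $\mu_z[p,q]=\mu[p,q]z^{|q|-|p|}$; $\mathcal{M}_P(z)=\sum_{p\le q\in P}\mu_z[p,q]$; $g^P_d(z)=\sum_{p\le q,\ |p|\le d\le |q|}\mu_z[p,q]$. *)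

theory Defs
  imports Main
begin

definition partial_order_on' :: "'a set \<Rightarrow> ('a \<Rightarrow> 'a \<Rightarrow> bool) \<Rightarrow> bool" where
  "partial_order_on' P le \<longleftrightarrow>
     (\<forall>p\<in>P. le p p) \<and>
     (\<forall>p\<in>P. \<forall>q\<in>P. le p q \<and> le q p \<longrightarrow> p = q) \<and>
     (\<forall>p\<in>P. \<forall>q\<in>P. \<forall>r\<in>P. le p q \<and> le q r \<longrightarrow> le p r)"

definition covers :: "'a set \<Rightarrow> ('a \<Rightarrow> 'a \<Rightarrow> bool) \<Rightarrow> 'a \<Rightarrow> 'a \<Rightarrow> bool" where
  "covers P le p q \<longleftrightarrow> p \<in> P \<and> q \<in> P \<and> le p q \<and> p \<noteq> q \<and>
     \<not> (\<exists>s\<in>P. le p s \<and> le s q \<and> s \<noteq> p \<and> s \<noteq> q)"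

definition minimal_elem :: "'a set \<Rightarrow> ('a \<Rightarrow> 'a \<Rightarrow> bool) \<Rightarrow> 'a \<Rightarrow> bool" where
  "minimal_elem P le p \<longleftrightarrow> p \<in> P \<and> \<not> (\<exists>s\<in>P. le s p \<and> s \<noteq> p)"

definition ranked_poset :: "'a set \<Rightarrow> ('a \<Rightarrow> 'a \<Rightarrow> bool) \<Rightarrow> ('a \<Rightarrow> int) \<Rightarrow> bool" where
  "ranked_poset P le rk \<longleftrightarrow> partial_order_on' P le \<and>
     (\<forall>p q. covers P le p q \<longrightarrow> rk q = rk p + 1) \<and>
     (\<forall>p. minimal_elem P le p \<longrightarrow> rk p = -1)"

definition ranked_poset_of_rank :: "'a set \<Rightarrow> ('a \<Rightarrow> 'a \<Rightarrow> bool) \<Rightarrow> ('a \<Rightarrow> int) \<Rightarrow> int \<Rightarrow> bool" where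
  "ranked_poset_of_rank P le rk d \<longleftrightarrow> ranked_poset P le rk \<and>
     (\<forall>p\<in>P. rk p \<le> d) \<and> (\<exists>p\<in>P. rk p = d)"

definition interval :: "'a set \<Rightarrow> ('a \<Rightarrow> 'a \<Rightarrow> bool) \<Rightarrow> 'a \<Rightarrow> 'a \<Rightarrow> 'a set" where
  "interval P le p q = {s\<in>P. le p s \<and> le s q}"

definition interval_boolean :: "'a set \<Rightarrow> ('a \<Rightarrow> 'a \<Rightarrow> bool) \<Rightarrow> 'a \<Rightarrow> 'a \<Rightarrow> bool" where
  "interval_boolean P le p q \<longleftrightarrow>
     (\<exists>(n::nat) (f::'a \<Rightarrow> nat set). bij_betw f (interval P le p q) (Pow {1..n}) \<and>
        (\<forall>s\<in>interval P le p q. \<forall>t\<in>interval P le p q. le s t \<longleftrightarrow> f s \<subseteq> f t))"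

definition simplicial_poset :: "'a set \<Rightarrow> ('a \<Rightarrow> 'a \<Rightarrow> bool) \<Rightarrow> ('a \<Rightarrow> int) \<Rightarrow> bool" where
  "simplicial_poset P le rk \<longleftrightarrow> ranked_poset P le rk \<and>
     (\<forall>p\<in>P. \<forall>q\<in>P. le p q \<longrightarrow> interval_boolean P le p q)"

definition has_unique_minimum :: "'a set \<Rightarrow> ('a \<Rightarrow> 'a \<Rightarrow> bool) \<Rightarrow> bool" where
  "has_unique_minimum P le \<longleftrightarrow> (\<exists>!m. m \<in> P \<and> (\<forall>p\<in>P. le m p))"

definition rank_le :: "'a set \<Rightarrow> ('a \<Rightarrow> int) \<Rightarrow> int \<Rightarrow> 'a set" where
  "rank_le P rk i = {p\<in>P. rk p \<le> i}"

definition near_simplicial_poset :: "'a set \<Rightarrow> ('a \<Rightarrow> 'a \<Rightarrow> bool) \<Rightarrow> ('a \<Rightarrow> int) \<Rightarrow> int \<Rightarrow> bool" where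
  "near_simplicial_poset P le rk d \<longleftrightarrow> ranked_poset_of_rank P le rk d \<and>
     (\<exists>\<C>. \<Union>\<C> = rank_le P rk (d - 1) \<and>
          (\<forall>C1\<in>\<C>. \<forall>C2\<in>\<C>. C1 \<noteq> C2 \<longrightarrow> C1 \<inter> C2 = {}) \<and>
          (\<forall>C1\<in>\<C>. \<forall>C2\<in>\<C>. C1 \<noteq> C2 \<longrightarrow>
              (\<forall>x\<in>C1. \<forall>y\<in>C2. \<not> le x y \<and> \<not> le y x)) \<and>
          (\<forall>C\<in>\<C>. simplicial_poset C le rk \<and> has_unique_minimum C le))"

definition mobius :: "'a set \<Rightarrow> ('a \<Rightarrow> 'a \<Rightarrow> bool) \<Rightarrow> 'a \<Rightarrow> 'a \<Rightarrow> int" where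
  "mobius P le = (THE \<mu>. \<forall>p q. \<mu> p q =
      (if p \<in> P \<and> q \<in> P \<and> le p q then
         (if p = q then 1 else - (\<Sum>s\<in>{s\<in>P. le p s \<and> le s q \<and> s \<noteq> q}. \<mu> p s))
       else 0))"

definition mobius_z :: "'a set \<Rightarrow> ('a \<Rightarrow> 'a \<Rightarrow> bool) \<Rightarrow> ('a \<Rightarrow> int) \<Rightarrow> 'b::comm_ring_1 \<Rightarrow> 'a \<Rightarrow> 'a \<Rightarrow> 'b" where
  "mobius_z P le rk z p q = of_int (mobius P le p q) * z ^ nat (rk q - rk p)"

definition M_poly :: "'a set \<Rightarrow> ('a \<Rightarrow> 'a \<Rightarrow> bool) \<Rightarrow> ('a \<Rightarrow> int) \<Rightarrow> 'b::comm_ring_1 \<Rightarrow> 'b" where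
  "M_poly P le rk z = (\<Sum>(p,q)\<in>{(p,q). p \<in> P \<and> q \<in> P \<and> le p q}. mobius_z P le rk z p q)"

definition g_poly :: "'a set \<Rightarrow> ('a \<Rightarrow> 'a \<Rightarrow> bool) \<Rightarrow> ('a \<Rightarrow> int) \<Rightarrow> int \<Rightarrow> 'b::comm_ring_1 \<Rightarrow> 'b" where
  "g_poly P le rk d z = (\<Sum>(p,q)\<in>{(p,q). p \<in> P \<and> q \<in> P \<and> le p q \<and> rk p \<le> d \<and> d \<le> rk q}.
      mobius_z P le rk z p q)"

definition f_num :: "'a set \<Rightarrow> ('a \<Rightarrow> int) \<Rightarrow> int \<Rightarrow> nat" where
  "f_num P rk r = card {p\<in>P. rk p = r}"

end

theory Submission
  imports Defs
begin

(* Split the pairs p \<le> q of P according to the rank of q: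
   since every rank is at most d, a pair either has |p| \<le> d \<le> |q| (these pairs make up
   g^P_d(z)) or has |q| \<le> d - 1.  For fixed q of rank at most d - 1, near-simpliciality says
   that the lower set {p. p \<le> q} is a Boolean interval [m, q] whose bottom m is a minimal
   element of P.  On a Boolean lattice of subsets of an n-set the rank is |A| - 1 and
   \<mu>[A, B] = (-1)^|B - A|, so the column sum \<Sum>_{p \<le> q} \<mu>_z[p, q] is the binomial expansion
   of (1 - z)^n = (1 - z)^(|q| + 1).  Grouping these columns by rank gives the f-vector sum. *)

lemma po_refl: "partial_order_on' P le \<Longrightarrow> p \<in> P \<Longrightarrow> le p p"
  and po_antisym: "partial_order_on' P le \<Longrightarrow> p \<in> P \<Longrightarrow> q \<in> P \<Longrightarrow> le p q \<Longrightarrow> le q p \<Longrightarrow> p = q"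
  and po_trans: "partial_order_on' P le \<Longrightarrow> p \<in> P \<Longrightarrow> q \<in> P \<Longrightarrow> r \<in> P \<Longrightarrow> le p q \<Longrightarrow> le q r
                 \<Longrightarrow> le p r"
  unfolding partial_order_on'_def by blast+

lemma ranked_poset_po: "ranked_poset P le rk \<Longrightarrow> partial_order_on' P le"
  unfolding ranked_poset_def by blast

(* Shrinking the top of an interval strictly shrinks it; this is the measure behind every
   induction over intervals below. *)
lemma interval_card_less:
  assumes "finite P" and po: "partial_order_on' P le"
    and "p \<in> P" "q \<in> P" "s \<in> P" "le p s" "le s q" "s \<noteq> q"
  shows "card (interval P le p s) < card (interval P le p q)"
proof (rule psubset_card_mono)
  show "finite (interval P le p q)" using assms(1) unfolding interval_def by simp
  have "interval P le p s \<subseteq> interval P le p q"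
  proof
    fix t assume "t \<in> interval P le p s"
    then show "t \<in> interval P le p q"
      using po_trans[OF po, of t s q] assms unfolding interval_def by blast
  qed
  moreover have "q \<in> interval P le p q"
    using po_trans[OF po, of p s q] po_refl[OF po, of q] assms
    unfolding interval_def by blast
  moreover have "q \<notin> interval P le p s"
    using po_antisym[OF po, of s q] assms unfolding interval_def by blast
  ultimately show "interval P le p s \<subset> interval P le p q" by blast
qed

function mobius_rec :: "'a set \<Rightarrow> ('a \<Rightarrow> 'a \<Rightarrow> bool) \<Rightarrow> 'a \<Rightarrow> 'a \<Rightarrow> int" where
  "mobius_rec P le p q =
     (if finite P \<and> partial_order_on' P le \<and> p \<in> P \<and> q \<in> P \<and> le p q then
        (if p = q then 1 else - (\<Sum>s\<in>{s\<in>P. le p s \<and> le s q \<and> s \<noteq> q}. mobius_rec P le p s))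
      else 0)"
  by auto
termination
  by (relation "measure (\<lambda>(P, le, p, q). card (interval P le p q))")
     (auto intro!: interval_card_less)

declare mobius_rec.simps[simp del]

lemma mobius_recursion_unique:
  assumes rec: "\<forall>p q. \<mu> p q =
      (if p \<in> P \<and> q \<in> P \<and> le p q then
         (if p = q then 1 else - (\<Sum>s\<in>{s\<in>P. le p s \<and> le s q \<and> s \<noteq> q}. \<mu> p s))
       else (0::int))"
    and "finite P" and "partial_order_on' P le"
  shows "\<mu> p q = mobius_rec P le p q"
  using assms
proof (induction P le p q rule: mobius_rec.induct)
  case (1 P le p q)
  show ?case
  proof (cases "p \<in> P \<and> q \<in> P \<and> le p q \<and> p \<noteq> q")
    case True
    have "\<mu> p q = - (\<Sum>s\<in>{s\<in>P. le p s \<and> le s q \<and> s \<noteq> q}. \<mu> p s)"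
      using "1.prems"(1) True by auto
    also have "\<dots> = - (\<Sum>s\<in>{s\<in>P. le p s \<and> le s q \<and> s \<noteq> q}. mobius_rec P le p s)"
      using "1.IH" "1.prems" True by (intro arg_cong[where f=uminus] sum.cong) auto
    also have "\<dots> = mobius_rec P le p q"
      using "1.prems" True by (subst (2) mobius_rec.simps) auto
    finally show ?thesis .
  next
    case False
    then show ?thesis using "1.prems" by (subst mobius_rec.simps) auto
  qed
qed

lemma mobius_unfold:
  assumes fin: "finite P" and po: "partial_order_on' P le"
  shows "mobius P le p q = (if p \<in> P \<and> q \<in> P \<and> le p q then
         (if p = q then 1 else - (\<Sum>s\<in>{s\<in>P. le p s \<and> le s q \<and> s \<noteq> q}. mobius P le p s))
       else 0)"
proof -
  let ?rec = "\<lambda>\<mu>. \<forall>p q. \<mu> p q =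
      (if p \<in> P \<and> q \<in> P \<and> le p q then
         (if p = q then 1 else - (\<Sum>s\<in>{s\<in>P. le p s \<and> le s q \<and> s \<noteq> q}. \<mu> p s))
       else (0::int))"
  have sol: "?rec (mobius_rec P le)"
    using fin po by (subst mobius_rec.simps) simp
  have "mobius P le = mobius_rec P le"
    unfolding mobius_def
  proof (rule the_equality)
    show "\<And>\<mu>. ?rec \<mu> \<Longrightarrow> \<mu> = mobius_rec P le"
      using mobius_recursion_unique[OF _ fin po] by blast
  qed (rule sol)
  then show ?thesis using sol by simp
qed

lemma exists_cover_below:
  assumes fin: "finite P" and po: "partial_order_on' P le"
    and "p \<in> P" "q \<in> P" "le p q" "p \<noteq> q"
  obtains t where "le p t" "covers P le t q"
proof -
  let ?S = "{s\<in>P. le p s \<and> le s q \<and> s \<noteq> q}"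
  let ?size = "\<lambda>t. card (interval P le p t)"
  have "\<forall>t. t \<in> ?S \<longrightarrow> ?size t < card P + 1"
    using fin card_mono[of P] unfolding interval_def by (auto simp: less_Suc_eq_le)
  moreover have "p \<in> ?S" using assms po_refl[OF po] by auto
  ultimately obtain t where tS: "t \<in> ?S" and tmax: "\<And>s. s \<in> ?S \<Longrightarrow> ?size s \<le> ?size t"
    using ex_has_greatest_nat[of "\<lambda>t. t \<in> ?S" p ?size] by blast
  have "covers P le t q"
    unfolding covers_def
  proof (intro conjI notI)
    show "t \<in> P" "q \<in> P" "le t q" "t = q \<Longrightarrow> False" using tS assms by auto
    assume "\<exists>s\<in>P. le t s \<and> le s q \<and> s \<noteq> t \<and> s \<noteq> q"
    then obtain s where s: "s \<in> P" "le t s" "le s q" "s \<noteq> t" "s \<noteq> q" by blast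
    then have "s \<in> ?S" using tS po_trans[OF po, of p t s] assms by auto
    moreover have "?size t < ?size s"
      using interval_card_less[OF fin po, of p s t] s tS assms(3) by auto
    ultimately show False using tmax by fastforce
  qed
  then show ?thesis using tS that by blast
qed

(* Ranks are monotone along the order: climb from p to q one cover at a time. *)
lemma rank_mono:
  assumes fin: "finite P" and rp: "ranked_poset P le rk"
    and "p \<in> P" "q \<in> P" "le p q"
  shows "rk p \<le> rk q"
  using assms(3-5)
proof (induction "card (interval P le p q)" arbitrary: q rule: less_induct)
  case less
  have po: "partial_order_on' P le" using rp by (rule ranked_poset_po)
  show ?case
  proof (cases "p = q")
    case False
    then obtain t where t: "le p t" "covers P le t q"
      using exists_cover_below[OF fin po] less.prems by blast
    then have tP: "t \<in> P" "le t q" "t \<noteq> q" unfolding covers_def by auto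
    have "rk q = rk t + 1" using rp t(2) unfolding ranked_poset_def by blast
    moreover have "rk p \<le> rk t"
      using less.hyps[of t] interval_card_less[OF fin po] less.prems t(1) tP by blast
    ultimately show ?thesis by simp
  qed simp
qed

lemma sum_subsets_alternating:
  assumes "finite D" "D \<noteq> {}"
  shows "(\<Sum>U\<in>Pow D. (-1::int) ^ card U) = 0"
proof -
  have "(\<Prod>x\<in>D. (-1::int) + 1) = (\<Sum>X\<in>Pow D. (\<Prod>x\<in>X. -1) * (\<Prod>x\<in>D - X. 1))"
    by (rule prod_add[OF assms(1)])
  then show ?thesis using assms by (simp add: zero_power card_gt_0_iff)
qed

lemma sum_subsets_binomial:
  fixes z :: "'b::comm_ring_1"
  assumes "finite F"
  shows "(\<Sum>A\<in>Pow F. (-z) ^ card (F - A)) = (1 - z) ^ card F"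
proof -
  have "(\<Prod>x\<in>F. 1 + (-z)) = (\<Sum>X\<in>Pow F. (\<Prod>x\<in>X. 1) * (\<Prod>x\<in>F - X. -z))"
    by (rule prod_add[OF assms(1)])
  then show ?thesis by simp
qed

locale boolean_interval =
  fixes P :: "'a set" and le :: "'a \<Rightarrow> 'a \<Rightarrow> bool" and m q :: 'a
    and n :: nat and f :: "'a \<Rightarrow> nat set"
  assumes finite_P: "finite P" and po: "partial_order_on' P le"
    and m_in: "m \<in> P" and q_in: "q \<in> P" and m_le_q: "le m q"
    and bij: "bij_betw f (interval P le m q) (Pow {1..n})"
    and iso: "\<And>s t. s \<in> interval P le m q \<Longrightarrow> t \<in> interval P le m q \<Longrightarrow> le s t \<longleftrightarrow> f s \<subseteq> f t"
begin

abbreviation I :: "'a set" where "I \<equiv> interval P le m q"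

lemma I_memD: "s \<in> I \<Longrightarrow> s \<in> P \<and> le m s \<and> le s q"
  unfolding interval_def by simp

lemma m_in_I: "m \<in> I" and q_in_I: "q \<in> I"
  using m_in q_in m_le_q po_refl[OF po] unfolding interval_def by auto

lemma f_inj: "s \<in> I \<Longrightarrow> t \<in> I \<Longrightarrow> f s = f t \<Longrightarrow> s = t"
  using bij_betw_imp_inj_on[OF bij] unfolding inj_on_def by blast

lemma f_range: "s \<in> I \<Longrightarrow> f s \<subseteq> {1..n}"
  using bij_betw_apply[OF bij, of s] by simp

lemma f_onto: "T \<subseteq> {1..n} \<Longrightarrow> \<exists>t\<in>I. f t = T"
  using bij_betw_imp_surj_on[OF bij] by (metis PowI imageE)

lemma f_finite: "s \<in> I \<Longrightarrow> finite (f s)"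
  using f_range finite_subset by blast

lemma I_convex:
  assumes "a \<in> I" "b \<in> I" "t \<in> P" "le a t" "le t b"
  shows "t \<in> I"
  using assms I_memD po_trans[OF po, of m a t] po_trans[OF po, of t b q] m_in q_in
  unfolding interval_def by blast

lemma f_bottom: "f m = {}"
proof -
  obtain t where t: "t \<in> I" "f t = {}" using f_onto[of "{}"] by auto
  then show ?thesis using iso[OF m_in_I t(1)] I_memD by auto
qed

lemma f_top: "f q = {1..n}"
proof -
  obtain t where t: "t \<in> I" "f t = {1..n}" using f_onto[of "{1..n}"] by auto
  then show ?thesis using iso[OF t(1) q_in_I] I_memD f_range[OF q_in_I] by auto
qed

lemma strict_interval_image:
  assumes p: "p \<in> I" and s: "s \<in> I" and ps: "le p s"
  shows "f ` {t\<in>P. le p t \<and> le t s \<and> t \<noteq> s}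
           = (\<lambda>U. U \<union> f p) ` (Pow (f s - f p) - {f s - f p})"
proof (rule set_eqI, rule iffI)
  fix T assume "T \<in> f ` {t\<in>P. le p t \<and> le t s \<and> t \<noteq> s}"
  then obtain t where t: "t \<in> P" "le p t" "le t s" "t \<noteq> s" and T: "T = f t" by blast
  have tI: "t \<in> I" using I_convex[OF p s t(1-3)] .
  have "f p \<subseteq> T" "T \<subseteq> f s" "T \<noteq> f s"
    using iso[OF p tI] iso[OF tI s] f_inj[OF tI s] t T by auto
  then show "T \<in> (\<lambda>U. U \<union> f p) ` (Pow (f s - f p) - {f s - f p})"
    by (intro image_eqI[of _ _ "T - f p"]) auto
next
  fix T assume "T \<in> (\<lambda>U. U \<union> f p) ` (Pow (f s - f p) - {f s - f p})"
  then obtain U where U: "U \<subseteq> f s - f p" "U \<noteq> f s - f p" and T: "T = U \<union> f p" by blast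
  have fps: "f p \<subseteq> f s" using iso[OF p s] ps by simp
  then obtain t where tI: "t \<in> I" and ft: "f t = T"
    using f_onto[of T] U T f_range[OF s] by blast
  have "le p t" "le t s" "t \<noteq> s"
    using iso[OF p tI] iso[OF tI s] ft T U fps by auto
  then show "T \<in> f ` {t\<in>P. le p t \<and> le t s \<and> t \<noteq> s}"
    using I_memD[OF tI] ft by blast
qed

lemma mobius_eq:
  assumes "p \<in> I" "s \<in> I" "le p s"
  shows "mobius P le p s = (-1) ^ card (f s - f p)"
  using assms(2,3)
proof (induction "card (f s - f p)" arbitrary: s rule: less_induct)
  case less
  note p = assms(1) and s = less.prems(1) and ps = less.prems(2)
  show ?case
  proof (cases "p = s")
    case True
    then show ?thesis using mobius_unfold[OF finite_P po, of p s] I_memD[OF p] ps by simp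
  next
    case False
    let ?S = "{t\<in>P. le p t \<and> le t s \<and> t \<noteq> s}"
    define D where "D = f s - f p"
    have fps: "f p \<subseteq> f s" using iso[OF p s] ps by simp
    have D: "finite D" "D \<noteq> {}"
      unfolding D_def using f_finite[OF s] fps f_inj[OF p s] False by auto
    have IH: "mobius P le p t = (-1) ^ card (f t - f p)" if t: "t \<in> ?S" for t
    proof -
      have tI: "t \<in> I" using I_convex[OF p s] t by blast
      have "f t - f p \<subset> f s - f p"
        using iso[OF p tI] iso[OF tI s] f_inj[OF tI s] t by auto
      then have "card (f t - f p) < card (f s - f p)"
        using f_finite[OF s] by (intro psubset_card_mono) auto
      then show ?thesis using less.hyps tI t by blast
    qed
    have inj_f: "inj_on f ?S" using f_inj I_convex[OF p s] unfolding inj_on_def by blast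
    have inj_union: "inj_on (\<lambda>U. U \<union> f p) (Pow D - {D})" unfolding inj_on_def D_def by blast
    have "mobius P le p s = - (\<Sum>t\<in>?S. mobius P le p t)"
      using mobius_unfold[OF finite_P po, of p s] I_memD[OF p] I_memD[OF s] ps False by simp
    also have "(\<Sum>t\<in>?S. mobius P le p t) = (\<Sum>T\<in>f ` ?S. (-1) ^ card (T - f p))"
      using IH by (simp add: sum.reindex[OF inj_f])
    also have "\<dots> = (\<Sum>U\<in>Pow D - {D}. (-1) ^ card (U \<union> f p - f p))"
      unfolding strict_interval_image[OF p s ps] D_def[symmetric]
      by (simp add: sum.reindex[OF inj_union])
    also have "\<dots> = (\<Sum>U\<in>Pow D - {D}. (-1) ^ card U)"
      by (intro sum.cong refl arg_cong[where f="\<lambda>U. (-1) ^ card U"]) (auto simp: D_def)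
    also have "\<dots> = - ((-1) ^ card D)"
      using sum_subsets_alternating[OF D] D(1) by (simp add: sum_diff1)
    finally show ?thesis unfolding D_def by simp
  qed
qed

lemma covers_remove_point:
  assumes s: "s \<in> I" and t: "t \<in> I" and x: "x \<in> f s" and ft: "f t = f s - {x}"
  shows "covers P le t s"
  unfolding covers_def
proof (intro conjI notI)
  show "t \<in> P" "s \<in> P" using I_memD s t by auto
  show "le t s" using iso[OF t s] ft by auto
  show "t = s \<Longrightarrow> False" using ft x by auto
  assume "\<exists>u\<in>P. le t u \<and> le u s \<and> u \<noteq> t \<and> u \<noteq> s"
  then obtain u where u: "u \<in> P" "le t u" "le u s" "u \<noteq> t" "u \<noteq> s" by blast
  have uI: "u \<in> I" using I_convex[OF t s u(1-3)] .
  have "f t \<subseteq> f u" "f u \<subseteq> f s" using iso[OF t uI] iso[OF uI s] u by auto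
  then have "f u = f t \<or> f u = f s" using ft by blast
  then show False using f_inj[OF uI t] f_inj[OF uI s] u by blast
qed

lemma rank_eq:
  assumes rp: "ranked_poset P le rk" and m_min: "minimal_elem P le m" and s: "s \<in> I"
  shows "rk s = int (card (f s)) - 1"
  using s
proof (induction "card (f s)" arbitrary: s)
  case 0
  then have "s = m" using f_finite f_inj[OF _ m_in_I] f_bottom by auto
  then show ?case using rp m_min f_bottom unfolding ranked_poset_def by simp
next
  case (Suc k s)
  then obtain x where x: "x \<in> f s" by (metis card.empty ex_in_conv nat.distinct(1))
  obtain t where t: "t \<in> I" "f t = f s - {x}"
    using f_onto[of "f s - {x}"] f_range[OF Suc.prems] by blast
  have "card (f t) = k" using t Suc.hyps(2) x f_finite[OF Suc.prems] by simp
  then have "rk t = int k - 1" using Suc.hyps(1) t(1) by simp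
  moreover have "rk s = rk t + 1"
    using rp covers_remove_point[OF Suc.prems t(1) x t(2)] unfolding ranked_poset_def by blast
  ultimately show ?case using Suc.hyps(2) by simp
qed

lemma lower_column_sum:
  fixes z :: "'b::comm_ring_1"
  assumes rp: "ranked_poset P le rk" and lower: "\<And>s. s \<in> P \<Longrightarrow> le s q \<Longrightarrow> le m s"
  shows "rk q = int n - 1"
    and "(\<Sum>p\<in>{p\<in>P. le p q}. mobius_z P le rk z p q) = (1 - z) ^ n"
proof -
  have m_min: "minimal_elem P le m"
    unfolding minimal_elem_def
    using m_in lower po_trans[OF po, of _ m q] po_antisym[OF po, of _ m] m_le_q q_in by blast
  have rank: "\<And>s. s \<in> I \<Longrightarrow> rk s = int (card (f s)) - 1"
    by (rule rank_eq[OF rp m_min])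
  show "rk q = int n - 1" using rank[OF q_in_I] f_top by simp
  have column: "{p\<in>P. le p q} = I" using lower unfolding interval_def by blast
  have entry: "mobius_z P le rk z p q = (- z) ^ card ({1..n} - f p)" if p: "p \<in> I" for p
  proof -
    have sub: "f p \<subseteq> {1..n}" using f_range[OF p] .
    then have "nat (rk q - rk p) = card ({1..n} - f p)"
      using rank[OF q_in_I] rank[OF p] f_top card_mono[OF _ sub]
      by (simp add: card_Diff_subset finite_subset)
    moreover have "mobius P le p q = (-1) ^ card ({1..n} - f p)"
      using mobius_eq[OF p q_in_I] I_memD[OF p] f_top by simp
    ultimately show ?thesis
      unfolding mobius_z_def by (simp add: power_mult_distrib[symmetric])
  qed
  have inj_f: "inj_on f I" using f_inj unfolding inj_on_def by blast
  have "(\<Sum>p\<in>{p\<in>P. le p q}. mobius_z P le rk z p q) = (\<Sum>p\<in>I. (- z) ^ card ({1..n} - f p))"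
    unfolding column using entry by (rule sum.cong[OF refl])
  also have "\<dots> = (\<Sum>A\<in>Pow {1..n}. (- z) ^ card ({1..n} - A))"
    using sum.reindex[OF inj_f, of "\<lambda>A. (- z) ^ card ({1..n} - A)"] bij_betw_imp_surj_on[OF bij]
    by simp
  also have "\<dots> = (1 - z) ^ n" using sum_subsets_binomial[of "{1..n}" z] by simp
  finally show "(\<Sum>p\<in>{p\<in>P. le p q}. mobius_z P le rk z p q) = (1 - z) ^ n" .
qed

end

lemma near_simplicial_ranked:
  assumes "near_simplicial_poset P le rk d"
  shows "ranked_poset P le rk" and "\<And>p. p \<in> P \<Longrightarrow> rk p \<le> d"
proof -
  have "ranked_poset_of_rank P le rk d"
    using assms unfolding near_simplicial_poset_def by (rule conjunct1)
  then show "ranked_poset P le rk" and "\<And>p. p \<in> P \<Longrightarrow> rk p \<le> d"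
    unfolding ranked_poset_of_rank_def by auto
qed

(* The component of P_{\<le> d-1} containing q is a simplicial poset with a minimum, and it
   contains everything of P below its elements (ranks only drop going down, and different
   components are incomparable). *)
lemma near_simplicial_component:
  assumes fin: "finite P" and ns: "near_simplicial_poset P le rk d"
    and q: "q \<in> P" "rk q \<le> d - 1"
  obtains C where "q \<in> C" "C \<subseteq> P" "simplicial_poset C le rk" "has_unique_minimum C le"
    and "\<And>s y. s \<in> P \<Longrightarrow> y \<in> C \<Longrightarrow> le s y \<Longrightarrow> s \<in> C"
proof -
  obtain \<C> where union: "\<Union>\<C> = rank_le P rk (d - 1)"
    and incomparable: "\<forall>C1\<in>\<C>. \<forall>C2\<in>\<C>. C1 \<noteq> C2 \<longrightarrow> (\<forall>x\<in>C1. \<forall>y\<in>C2. \<not> le x y \<and> \<not> le y x)"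
    and components: "\<forall>C\<in>\<C>. simplicial_poset C le rk \<and> has_unique_minimum C le"
    using ns unfolding near_simplicial_poset_def by (elim exE conjE) (rule that; assumption)
  note rp = near_simplicial_ranked(1)[OF ns]
  have "q \<in> \<Union>\<C>" using q union unfolding rank_le_def by simp
  then obtain C where C: "C \<in> \<C>" "q \<in> C" by blast
  have CP: "C \<subseteq> rank_le P rk (d - 1)" using C union by blast
  have "s \<in> C" if s: "s \<in> P" and y: "y \<in> C" and sy: "le s y" for s y
  proof -
    have y_rank: "y \<in> P" "rk y \<le> d - 1" using y CP unfolding rank_le_def by auto
    then have "rk s \<le> d - 1" using rank_mono[OF fin rp s y_rank(1) sy] by simp
    then have "s \<in> \<Union>\<C>" using s union unfolding rank_le_def by simp
    then obtain C' where C': "C' \<in> \<C>" "s \<in> C'" by blast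
    show "s \<in> C"
    proof (rule ccontr)
      assume "s \<notin> C"
      then have "C' \<noteq> C" using C' by blast
      then show False using incomparable C(1) C' y sy by blast
    qed
  qed
  moreover have "C \<subseteq> P" using CP unfolding rank_le_def by blast
  moreover have "simplicial_poset C le rk" "has_unique_minimum C le" using components C(1) by auto
  ultimately show ?thesis using that C(2) by blast
qed

lemma near_simplicial_lower_interval:
  assumes fin: "finite P" and ns: "near_simplicial_poset P le rk d"
    and q: "q \<in> P" "rk q \<le> d - 1"
  obtains m n f where "boolean_interval P le m q n f" "\<And>s. s \<in> P \<Longrightarrow> le s q \<Longrightarrow> le m s"
proof -
  obtain C where qC: "q \<in> C" and CP: "C \<subseteq> P" and simp: "simplicial_poset C le rk"
    and min: "has_unique_minimum C le" and down: "\<And>s y. s \<in> P \<Longrightarrow> y \<in> C \<Longrightarrow> le s y \<Longrightarrow> s \<in> C"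
    using near_simplicial_component[OF assms] by blast
  obtain m where mC: "m \<in> C" and m_le: "\<And>p. p \<in> C \<Longrightarrow> le m p"
    using min unfolding has_unique_minimum_def by blast
  have same: "interval C le m q = interval P le m q"
    using CP down[OF _ qC] unfolding interval_def by blast
  obtain n and f :: "'a \<Rightarrow> nat set" where
    bij: "bij_betw f (interval P le m q) (Pow {1..n})"
    and iso: "\<forall>s\<in>interval P le m q. \<forall>t\<in>interval P le m q. le s t \<longleftrightarrow> f s \<subseteq> f t"
    using simp mC qC m_le[OF qC] same unfolding simplicial_poset_def interval_boolean_def by metis
  have po: "partial_order_on' P le" using near_simplicial_ranked(1)[OF ns] by (rule ranked_poset_po)
  have "boolean_interval P le m q n f"
    using fin po mC qC CP m_le[OF qC] bij iso by unfold_locales auto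
  moreover have "\<And>s. s \<in> P \<Longrightarrow> le s q \<Longrightarrow> le m s" using down[OF _ qC] m_le by blast
  ultimately show ?thesis using that by blast
qed

lemma near_simplicial_column_sum:
  fixes z :: "'b::comm_ring_1"
  assumes fin: "finite P" and ns: "near_simplicial_poset P le rk d"
    and q: "q \<in> P" "rk q \<le> d - 1"
  shows "-1 \<le> rk q"
    and "(\<Sum>p\<in>{p\<in>P. le p q}. mobius_z P le rk z p q) = (1 - z) ^ nat (rk q + 1)"
proof -
  obtain m n f where bi: "boolean_interval P le m q n f"
    and lower: "\<And>s. s \<in> P \<Longrightarrow> le s q \<Longrightarrow> le m s"
    using near_simplicial_lower_interval[OF assms] by blast
  note col = boolean_interval.lower_column_sum[OF bi near_simplicial_ranked(1)[OF ns] lower]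
  show "-1 \<le> rk q" using col(1) by simp
  show "(\<Sum>p\<in>{p\<in>P. le p q}. mobius_z P le rk z p q) = (1 - z) ^ nat (rk q + 1)"
    using col by simp
qed

lemma M_poly_split:
  fixes z :: "'b::comm_ring_1"
  assumes fin: "finite P" and bounded: "\<And>p. p \<in> P \<Longrightarrow> rk p \<le> d"
  shows "M_poly P le rk z = g_poly P le rk d z
           + (\<Sum>q\<in>{q\<in>P. rk q \<le> d - 1}. \<Sum>p\<in>{p\<in>P. le p q}. mobius_z P le rk z p q)"
proof -
  define G where "G = {(p, q). p \<in> P \<and> q \<in> P \<and> le p q \<and> rk p \<le> d \<and> d \<le> rk q}"
  define R where "R = {(p, q). p \<in> P \<and> q \<in> P \<and> le p q \<and> rk q \<le> d - 1}"
  let ?h = "\<lambda>(p, q). mobius_z P le rk z p q"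
  have "G \<subseteq> P \<times> P" "R \<subseteq> P \<times> P" unfolding G_def R_def by auto
  then have fin_GR: "finite G" "finite R" using finite_subset fin by blast+
  have pairs: "{(p, q). p \<in> P \<and> q \<in> P \<and> le p q} = G \<union> R"
    unfolding G_def R_def using bounded by auto
  have "M_poly P le rk z = sum ?h G + sum ?h R"
    unfolding M_poly_def pairs
    by (rule sum.union_disjoint[OF fin_GR]) (auto simp: G_def R_def)
  moreover have "sum ?h R = (\<Sum>q\<in>{q\<in>P. rk q \<le> d - 1}. \<Sum>p\<in>{p\<in>P. le p q}. mobius_z P le rk z p q)"
  proof -
    have "sum ?h R = (\<Sum>(q, p)\<in>Sigma {q\<in>P. rk q \<le> d - 1} (\<lambda>q. {p\<in>P. le p q}). mobius_z P le rk z p q)"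
      by (rule sum.reindex_bij_witness[where i="\<lambda>(q, p). (p, q)" and j="\<lambda>(p, q). (q, p)"])
         (auto simp: R_def)
    then show ?thesis by (simp add: sum.Sigma fin)
  qed
  ultimately show ?thesis unfolding g_poly_def G_def by simp
qed

lemma sum_by_rank:
  fixes h :: "int \<Rightarrow> 'b::comm_ring_1"
  assumes fin: "finite P" and ranks: "\<And>q. q \<in> P \<Longrightarrow> rk q \<le> d - 1 \<Longrightarrow> -1 \<le> rk q"
  shows "(\<Sum>q\<in>{q\<in>P. rk q \<le> d - 1}. h (rk q)) = (\<Sum>r\<in>{-1..d-1}. h r * of_nat (f_num P rk r))"
proof -
  have "(\<Sum>q\<in>{q\<in>P. rk q \<le> d - 1}. h (rk q))
        = (\<Sum>r\<in>{-1..d-1}. \<Sum>q\<in>{q\<in>{q\<in>P. rk q \<le> d - 1}. rk q = r}. h (rk q))"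
  proof (rule sum.group[symmetric])
    show "finite {q\<in>P. rk q \<le> d - 1}" using fin by simp
    show "rk ` {q\<in>P. rk q \<le> d - 1} \<subseteq> {-1..d-1}" using ranks by auto
  qed simp
  also have "\<dots> = (\<Sum>r\<in>{-1..d-1}. \<Sum>q\<in>{q\<in>P. rk q = r}. h r)"
    by (intro sum.cong refl) auto
  finally show ?thesis unfolding f_num_def by (simp add: mult.commute)
qed

theorem mainTheorem14:
  fixes P :: "'a set" and le :: "'a \<Rightarrow> 'a \<Rightarrow> bool" and rk :: "'a \<Rightarrow> int"
    and d :: int and z :: "'b::comm_ring_1"
  assumes "finite P"
    and "near_simplicial_poset P le rk d"
  shows "M_poly P le rk z =
           g_poly P le rk d z + (\<Sum>r\<in>{-1..d-1}. (1 - z) ^ nat (r + 1) * of_nat (f_num P rk r))"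
proof -
  have "M_poly P le rk z = g_poly P le rk d z
          + (\<Sum>q\<in>{q\<in>P. rk q \<le> d - 1}. \<Sum>p\<in>{p\<in>P. le p q}. mobius_z P le rk z p q)"
    by (rule M_poly_split[OF assms(1)]) (rule near_simplicial_ranked(2)[OF assms(2)])
  also have "(\<Sum>q\<in>{q\<in>P. rk q \<le> d - 1}. \<Sum>p\<in>{p\<in>P. le p q}. mobius_z P le rk z p q)
        = (\<Sum>q\<in>{q\<in>P. rk q \<le> d - 1}. (1 - z) ^ nat (rk q + 1))"
    by (intro sum.cong refl near_simplicial_column_sum(2)[OF assms]) auto
  also have "\<dots> = (\<Sum>r\<in>{-1..d-1}. (1 - z) ^ nat (r + 1) * of_nat (f_num P rk r))"
    using sum_by_rank[OF assms(1), where h="\<lambda>r. (1 - z) ^ nat (r + 1)"]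
      near_simplicial_column_sum(1)[OF assms] by simp
  finally show ?thesis .
qed

end
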